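(* Let $T$ be a tree of order $n \geq 4$ which is not the star $S_n$ and not one of the paths $P_4$, $P_5$, $P_6$. Then $$|E(\Lambda(T))| \geq \tfrac{1}{2}\, n\,(n - D(T)).$$
   Context: All graphs are simple and finite. For a graph $G$ and disjoint $X, Y \subseteq V(G)$, $E(X,Y)$ denotes the set of edges with one endpoint in $X$ and the other in $Y$. An ordered pair $(X,Y)$ of disjoint subsets of $V(G)$ with $|X|=|Y|=2$ is an odd pair of $G$ if $|E(X,Y)|$ is odd. A $2$-subset $\{u,v\}\subseteq V(G)$ is an odd set if it is the first component of some odd pair of $G$. The graph $\Lambda(G)$ has vertex set $V(G)$, and $uv$ is an edge of $\Lambda(G)$ iff $\{u,v\}$ is an odd set of $G$. For a tree $T$, $D(T)$ denotes the maximum, over vertices $w$ of $T$, of the number of leaves of $T$ adjacent to $w$. $S_n$ is the star and $P_k$ the path on $k$ vertices. *)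

theory Defs
  imports Complex_Main
begin

definition simple_graph :: "'a set \<Rightarrow> 'a set set \<Rightarrow> bool" where
  "simple_graph V E \<longleftrightarrow> finite V \<and> (\<forall>e\<in>E. e \<subseteq> V \<and> card e = 2)"

definition adj :: "'a set set \<Rightarrow> 'a \<Rightarrow> 'a \<Rightarrow> bool" where
  "adj E u v \<longleftrightarrow> {u, v} \<in> E"

definition connected_graph :: "'a set \<Rightarrow> 'a set set \<Rightarrow> bool" where
  "connected_graph V E \<longleftrightarrow> V \<noteq> {} \<and>
     (\<forall>u\<in>V. \<forall>v\<in>V. (\<lambda>x y. adj E x y \<and> x \<in> V \<and> y \<in> V)\<^sup>*\<^sup>* u v)"

definition has_cycle :: "'a set \<Rightarrow> 'a set set \<Rightarrow> bool" where
  "has_cycle V E \<longleftrightarrow> (\<exists>cs. length cs \<ge> 3 \<and> distinct cs \<and> set cs \<subseteq> V \<and>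
      (\<forall>i. Suc i < length cs \<longrightarrow> adj E (cs ! i) (cs ! Suc i)) \<and>
      adj E (last cs) (hd cs))"

definition is_tree :: "'a set \<Rightarrow> 'a set set \<Rightarrow> bool" where
  "is_tree V E \<longleftrightarrow> simple_graph V E \<and> connected_graph V E \<and> \<not> has_cycle V E"

definition edges_between :: "'a set set \<Rightarrow> 'a set \<Rightarrow> 'a set \<Rightarrow> 'a set set" where
  "edges_between E X Y = {e \<in> E. \<exists>x\<in>X. \<exists>y\<in>Y. e = {x, y}}"

definition odd_pair :: "'a set \<Rightarrow> 'a set set \<Rightarrow> 'a set \<Rightarrow> 'a set \<Rightarrow> bool" where
  "odd_pair V E X Y \<longleftrightarrow> X \<subseteq> V \<and> Y \<subseteq> V \<and> X \<inter> Y = {} \<and> card X = 2 \<and> card Y = 2 \<and>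
     odd (card (edges_between E X Y))"

definition odd_set :: "'a set \<Rightarrow> 'a set set \<Rightarrow> 'a set \<Rightarrow> bool" where
  "odd_set V E X \<longleftrightarrow> (\<exists>Y. odd_pair V E X Y)"

definition Lambda_edges :: "'a set \<Rightarrow> 'a set set \<Rightarrow> 'a set set" where
  "Lambda_edges V E = {X. X \<subseteq> V \<and> card X = 2 \<and> odd_set V E X}"

definition degree :: "'a set \<Rightarrow> 'a set set \<Rightarrow> 'a \<Rightarrow> nat" where
  "degree V E v = card {u \<in> V. adj E v u}"

definition is_leaf :: "'a set \<Rightarrow> 'a set set \<Rightarrow> 'a \<Rightarrow> bool" where
  "is_leaf V E v \<longleftrightarrow> v \<in> V \<and> degree V E v = 1"

definition Dmax :: "'a set \<Rightarrow> 'a set set \<Rightarrow> nat" where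
  "Dmax V E = Max ((\<lambda>w. card {l \<in> V. is_leaf V E l \<and> adj E w l}) ` V)"

definition graph_iso :: "'a set \<Rightarrow> 'a set set \<Rightarrow> 'b set \<Rightarrow> 'b set set \<Rightarrow> bool" where
  "graph_iso V E W F \<longleftrightarrow> (\<exists>f. bij_betw f V W \<and>
     (\<forall>x\<in>V. \<forall>y\<in>V. {x, y} \<in> E \<longleftrightarrow> {f x, f y} \<in> F))"

definition star_edges :: "nat \<Rightarrow> nat set set" where
  "star_edges n = {{0, i} | i. 0 < i \<and> i < n}"

definition path_edges :: "nat \<Rightarrow> nat set set" where
  "path_edges k = {{i, Suc i} | i. Suc i < k}"

end

theory Submission
  imports Defs
begin

text \<open>If \<open>{u, v}\<close> is not an odd set, then for any two further vertices \<open>x, y\<close> the number of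
  edges between \<open>{u, v}\<close> and \<open>{x, y}\<close> is even, so \<open>u\<close> and \<open>v\<close> are either twins (equal
  neighbourhoods outside \<open>{u, v}\<close>) or anti-twins (complementary ones). In a tree with at least
  four vertices, twins are leaves hanging at a common vertex. If the tree is neither a star nor
  \<open>P\<^sub>4\<close>, \<open>P\<^sub>5\<close>, \<open>P\<^sub>6\<close>, a vertex has at most one anti-twin, never together with a twin,
  and only if \<open>D(T) \<ge> 2\<close>. Hence each vertex has at most \<open>D(T) - 1\<close> non-neighbours in
  \<open>\<Lambda>(T)\<close>, i.e. degree at least \<open>n - D(T)\<close>, and summing degrees gives the bound.\<close>

lemma adj_commute: "adj E x y \<longleftrightarrow> adj E y x"
  by (simp add: adj_def insert_commute)

lemma has_cycle_iff:
  "has_cycle V E \<longleftrightarrow> (\<exists>cs. 3 \<le> length cs \<and> distinct cs \<and> set cs \<subseteq> V \<and>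
     successively (adj E) cs \<and> adj E (last cs) (hd cs))"
  by (simp add: has_cycle_def successively_conv_nth)

lemma ex_in_diff_doubleton:
  assumes "finite A" "3 \<le> card A"
  obtains z where "z \<in> A" "z \<noteq> u" "z \<noteq> v"
proof -
  have "card {u, v} \<le> 2" by (simp add: card_insert_if)
  then have "\<not> A \<subseteq> {u, v}" using card_mono[of "{u, v}" A] assms(2) by auto
  then show ?thesis using that by blast
qed

lemma sum_card_incident_doubletons:
  assumes "finite V" and L: "\<And>X. X \<in> L \<Longrightarrow> X \<subseteq> V \<and> card X = 2"
  shows "(\<Sum>u\<in>V. card {v \<in> V. v \<noteq> u \<and> {u, v} \<in> L}) = 2 * card L"
proof -
  have "finite L" using assms by (meson Pow_iff finite_Pow_iff finite_subset subsetI)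
  have incident: "card {v \<in> V. v \<noteq> u \<and> {u, v} \<in> L} = card {X \<in> L. u \<in> X}" for u
  proof (rule bij_betw_same_card)
    show "bij_betw (\<lambda>v. {u, v}) {v \<in> V. v \<noteq> u \<and> {u, v} \<in> L} {X \<in> L. u \<in> X}"
    proof (rule bij_betw_imageI)
      show "inj_on (\<lambda>v. {u, v}) {v \<in> V. v \<noteq> u \<and> {u, v} \<in> L}"
        by (auto simp: inj_on_def doubleton_eq_iff)
      have "X \<in> (\<lambda>v. {u, v}) ` {v \<in> V. v \<noteq> u \<and> {u, v} \<in> L}" if "X \<in> L" "u \<in> X" for X
        using L[OF \<open>X \<in> L\<close>] that by (auto simp: card_2_iff image_iff insert_commute)
      then show "(\<lambda>v. {u, v}) ` {v \<in> V. v \<noteq> u \<and> {u, v} \<in> L} = {X \<in> L. u \<in> X}"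
        by auto
    qed
  qed
  have "(\<Sum>u\<in>V. card {X \<in> L. u \<in> X}) = (\<Sum>u\<in>V. \<Sum>X\<in>L. of_bool (u \<in> X))"
    using \<open>finite L\<close> by (simp add: Int_def)
  also have "\<dots> = (\<Sum>X\<in>L. card (V \<inter> X))"
    using \<open>finite V\<close> by (subst sum.swap) (simp add: Int_def)
  also have "\<dots> = (\<Sum>X\<in>L. 2)"
    using L by (intro sum.cong) (auto simp: Int_absorb1)
  finally show ?thesis by (simp add: incident)
qed

lemma graph_iso_by_inverse:
  assumes "bij_betw g W V"
    and "\<And>i j. i \<in> W \<Longrightarrow> j \<in> W \<Longrightarrow> {g i, g j} \<in> E \<longleftrightarrow> {i, j} \<in> F"
  shows "graph_iso V E W F"
  unfolding graph_iso_def
proof (intro exI conjI ballI)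
  show "bij_betw (inv_into W g) V W" using assms(1) by (rule bij_betw_inv_into)
  fix x y assume "x \<in> V" "y \<in> V"
  then show "{x, y} \<in> E \<longleftrightarrow> {inv_into W g x, inv_into W g y} \<in> F"
    using assms(2)[of "inv_into W g x" "inv_into W g y"] assms(1)
    by (simp add: bij_betw_def f_inv_into_f inv_into_into)
qed

definition pendant_at :: "'a set set \<Rightarrow> 'a \<Rightarrow> 'a \<Rightarrow> bool" where
  "pendant_at E l w \<longleftrightarrow> (\<forall>x. adj E l x \<longleftrightarrow> x = w)"

definition twins :: "'a set \<Rightarrow> 'a set set \<Rightarrow> 'a \<Rightarrow> 'a \<Rightarrow> bool" where
  "twins V E u v \<longleftrightarrow> (\<forall>z\<in>V - {u, v}. adj E u z \<longleftrightarrow> adj E v z)"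

definition anti_twins :: "'a set \<Rightarrow> 'a set set \<Rightarrow> 'a \<Rightarrow> 'a \<Rightarrow> bool" where
  "anti_twins V E u v \<longleftrightarrow> (\<forall>z\<in>V - {u, v}. adj E u z \<longleftrightarrow> \<not> adj E v z)"

lemma anti_twins_sym: "anti_twins V E u v \<Longrightarrow> anti_twins V E v u"
  unfolding anti_twins_def by (auto simp: insert_commute)

lemma card_edges_between_doubletons:
  assumes "distinct [u, v, x, y]"
  shows "card (edges_between E {u, v} {x, y}) =
    of_bool (adj E u x) + of_bool (adj E u y) + of_bool (adj E v x) + of_bool (adj E v y)"
proof -
  have "edges_between E {u, v} {x, y} =
     (if adj E u x then {{u, x}} else {}) \<union> (if adj E u y then {{u, y}} else {}) \<union>
     (if adj E v x then {{v, x}} else {}) \<union> (if adj E v y then {{v, y}} else {})"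
    unfolding edges_between_def adj_def by auto
  then show ?thesis using assms
    by (auto simp: card_insert_if doubleton_eq_iff)
qed

lemma twins_or_anti_twins_if_not_odd_set:
  assumes "u \<in> V" "v \<in> V" "u \<noteq> v" and "\<not> odd_set V E {u, v}"
  shows "twins V E u v \<or> anti_twins V E u v"
proof -
  have "(adj E u x \<longleftrightarrow> adj E v x) \<longleftrightarrow> (adj E u y \<longleftrightarrow> adj E v y)"
    if "x \<in> V - {u, v}" "y \<in> V - {u, v}" "x \<noteq> y" for x y
  proof -
    have "\<not> odd_pair V E {u, v} {x, y}" using assms(4) by (simp add: odd_set_def)
    then have "even (card (edges_between E {u, v} {x, y}))"
      using that assms by (simp add: odd_pair_def)
    moreover have "distinct [u, v, x, y]" using that assms by auto
    ultimately show ?thesis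
      by (simp add: card_edges_between_doubletons of_bool_def split: if_splits)
  qed
  then show ?thesis unfolding twins_def anti_twins_def by metis
qed

section \<open>Trees\<close>

locale tree =
  fixes V :: "'a set" and E :: "'a set set"
  assumes is_tree: "is_tree V E"
begin

lemma finite_V: "finite V"
  using is_tree by (simp add: is_tree_def simple_graph_def)

lemma adj_in_V: "adj E x y \<Longrightarrow> x \<in> V \<and> y \<in> V"
  using is_tree by (auto simp: is_tree_def simple_graph_def adj_def)

lemma not_adj_self: "\<not> adj E x x"
  using is_tree by (auto simp: is_tree_def simple_graph_def adj_def)

lemma adj_closed_superset:
  assumes "x \<in> V" "x \<in> S" and closed: "\<And>a b. a \<in> S \<Longrightarrow> adj E a b \<Longrightarrow> b \<in> S"
  shows "V \<subseteq> S"
proof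
  fix y assume "y \<in> V"
  then have "(\<lambda>a b. adj E a b \<and> a \<in> V \<and> b \<in> V)\<^sup>*\<^sup>* x y"
    using is_tree \<open>x \<in> V\<close> by (simp add: is_tree_def connected_graph_def)
  then show "y \<in> S"
    by (induction rule: rtranclp_induct) (use \<open>x \<in> S\<close> closed in blast)+
qed

lemma ex_adj:
  assumes "x \<in> V" "y \<in> V" "x \<noteq> y"
  obtains z where "adj E x z"
  using adj_closed_superset[of x "{x}"] assms by blast

lemma no_cycle:
  assumes "distinct cs" "set cs \<subseteq> V" "successively (adj E) cs" "3 \<le> length cs"
    and "adj E (last cs) (hd cs)"
  shows False
  using is_tree assms unfolding is_tree_def has_cycle_iff by blast

lemma no_triangle: "adj E a b \<Longrightarrow> adj E b c \<Longrightarrow> adj E c a \<Longrightarrow> False"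
  using no_cycle[of "[a, b, c]"] adj_in_V not_adj_self by (auto simp: adj_commute)

lemma no_square:
  "adj E a b \<Longrightarrow> adj E b c \<Longrightarrow> adj E c d \<Longrightarrow> adj E d a \<Longrightarrow> a \<noteq> c \<Longrightarrow> b \<noteq> d \<Longrightarrow> False"
  using no_cycle[of "[a, b, c, d]"] adj_in_V not_adj_self by auto

lemma path_no_chord:
  assumes "distinct cs" "set cs \<subseteq> V" "successively (adj E) cs" "i + 2 \<le> j" "j < length cs"
  shows "\<not> adj E (cs ! i) (cs ! j)"
proof
  assume chord: "adj E (cs ! i) (cs ! j)"
  define c where "c = take (j + 1 - i) (drop i cs)"
  have "successively (adj E) c"
    using assms(3) unfolding c_def by (metis append_take_drop_id successively_append_iff)
  moreover have "distinct c" "set c \<subseteq> V"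
    using assms(1,2) set_take_subset set_drop_subset by (fastforce simp: c_def)+
  moreover have "3 \<le> length c" "hd c = cs ! i" "last c = cs ! j"
    using assms(4,5) by (auto simp: c_def hd_drop_conv_nth last_conv_nth)
  ultimately show False
    using no_cycle[of c] chord by (simp add: adj_commute)
qed

lemma ex_pendant:
  assumes "2 \<le> card V"
  obtains l w where "l \<in> V" "pendant_at E l w"
proof -
  define is_path where
    "is_path cs \<longleftrightarrow> cs \<noteq> [] \<and> distinct cs \<and> set cs \<subseteq> V \<and> successively (adj E) cs" for cs
  obtain x0 where "x0 \<in> V" using assms by (metis card.empty ex_in_conv not_numeral_le_zero)
  then have "is_path [x0]" by (simp add: is_path_def)
  moreover have "length cs < Suc (card V)" if "is_path cs" for cs
    using that card_mono[OF finite_V, of "set cs"] distinct_card[of cs] by (simp add: is_path_def)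
  ultimately obtain cs where cs: "is_path cs"
    and longest: "\<And>cs'. is_path cs' \<Longrightarrow> length cs' \<le> length cs"
    using ex_has_greatest_nat[of is_path "[x0]" length] by blast
  obtain x cs' where x: "cs = x # cs'" using cs by (cases cs) (auto simp: is_path_def)
  have "y = cs ! 1" if "adj E x y" for y
  proof -
    have "y \<in> set cs"
    proof (rule ccontr)
      assume "y \<notin> set cs"
      then have "is_path (y # cs)"
        using cs \<open>adj E x y\<close> adj_in_V by (auto simp: is_path_def x adj_commute)
      then show False using longest[of "y # cs"] by simp
    qed
    then obtain j where j: "j < length cs" "y = cs ! j" by (auto simp: in_set_conv_nth)
    have "j \<noteq> 0" using \<open>adj E x y\<close> j not_adj_self x by (metis nth_Cons_0)
    moreover have "\<not> 2 \<le> j"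
      using path_no_chord[of cs 0 j] cs j \<open>adj E x y\<close> by (auto simp: is_path_def x)
    ultimately have "j = 1" by linarith
    then show "y = cs ! 1" using j by simp
  qed
  moreover obtain y where "adj E x y"
  proof -
    have "\<not> V \<subseteq> {x}" using card_mono[of "{x}" V] assms by auto
    then obtain z where "z \<in> V" "z \<noteq> x" by blast
    then show ?thesis using that ex_adj cs by (auto simp: is_path_def x)
  qed
  ultimately have "pendant_at E x (cs ! 1)" unfolding pendant_at_def by blast
  then show ?thesis using that cs by (auto simp: is_path_def x)
qed

lemma pendant_at_imp_leaf:
  assumes "l \<in> V" "pendant_at E l w"
  shows "is_leaf V E l \<and> adj E w l"
proof -
  have "adj E l w" using assms(2) by (simp add: pendant_at_def)
  then have "{x \<in> V. adj E l x} = {w}" using assms adj_in_V by (auto simp: pendant_at_def)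
  then show ?thesis using assms \<open>adj E l w\<close> by (simp add: is_leaf_def degree_def adj_commute)
qed

lemma card_pendants_le_Dmax:
  assumes "A \<subseteq> V" "\<And>l. l \<in> A \<Longrightarrow> pendant_at E l w"
  shows "card A \<le> Dmax V E"
proof (cases "A = {}")
  case False
  then have "w \<in> V" using assms(2) adj_in_V unfolding pendant_at_def by blast
  have "A \<subseteq> {l \<in> V. is_leaf V E l \<and> adj E w l}"
    using assms pendant_at_imp_leaf by blast
  then have "card A \<le> card {l \<in> V. is_leaf V E l \<and> adj E w l}"
    using finite_V by (intro card_mono) auto
  also have "\<dots> \<le> Dmax V E"
    unfolding Dmax_def using finite_V \<open>w \<in> V\<close> by (intro Max_ge) auto
  finally show ?thesis .
qed simp

lemma one_le_Dmax:
  assumes "2 \<le> card V"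
  shows "1 \<le> Dmax V E"
proof -
  obtain l w where "l \<in> V" "pendant_at E l w" using ex_pendant assms by blast
  then show ?thesis using card_pendants_le_Dmax[of "{l}" w] by simp
qed

lemma graph_iso_path_if_spanning_path:
  assumes "distinct xs" "set xs = V" "successively (adj E) xs"
  shows "graph_iso V E {0..<length xs} (path_edges (length xs))"
proof (rule graph_iso_by_inverse)
  show "bij_betw ((!) xs) {0..<length xs} V"
    using bij_betw_nth[OF assms(1)] assms(2) by (simp add: atLeast0LessThan)
  fix i j assume "i \<in> {0..<length xs}" "j \<in> {0..<length xs}"
  then have ij: "i < length xs" "j < length xs" by auto
  have "adj E (xs ! i) (xs ! j) \<longleftrightarrow> j = Suc i \<or> i = Suc j"
  proof
    assume a: "adj E (xs ! i) (xs ! j)"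
    have "i \<noteq> j" using a not_adj_self by auto
    moreover have "\<not> i + 2 \<le> j" "\<not> j + 2 \<le> i"
      using path_no_chord[OF assms(1) _ assms(3)] a adj_commute[THEN iffD1, OF a] ij assms(2)
      by auto
    ultimately show "j = Suc i \<or> i = Suc j" by linarith
  next
    assume "j = Suc i \<or> i = Suc j"
    then show "adj E (xs ! i) (xs ! j)"
      using successively_nth[OF assms(3)] ij by (auto simp: adj_commute)
  qed
  then show "{xs ! i, xs ! j} \<in> E \<longleftrightarrow> {i, j} \<in> path_edges (length xs)"
    using ij by (auto simp: adj_def path_edges_def doubleton_eq_iff)
qed

lemma graph_iso_star_if_dominating:
  assumes "c \<in> V" and dominating: "\<And>x. x \<in> V \<Longrightarrow> x \<noteq> c \<Longrightarrow> adj E c x"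
  shows "graph_iso V E {0..<card V} (star_edges (card V))"
proof -
  define n where "n = card V"
  have "card {1..<n} = card (V - {c})" using assms(1) finite_V by (simp add: n_def)
  then obtain g where g: "bij_betw g {1..<n} (V - {c})"
    using finite_V bij_betw_iff_card by blast
  define h where "h = g(0 := c)"
  have "bij_betw h ({1..<n} \<union> {0}) ((V - {c}) \<union> {c})"
    unfolding h_def
    by (rule bij_betw_combine) (use g in \<open>auto simp: bij_betw_def inj_on_def image_def\<close>)
  moreover have "{1..<n} \<union> {0} = {0..<n}" "(V - {c}) \<union> {c} = V"
    using assms(1) finite_V by (auto simp: n_def card_gt_0_iff)
  ultimately have h: "bij_betw h {0..<n} V" by simp
  have h_in: "h i \<in> V - {c}" if "i \<in> {1..<n}" for i
    using g that by (auto simp: h_def bij_betw_def)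
  show ?thesis
    unfolding n_def[symmetric]
  proof (rule graph_iso_by_inverse[OF h])
    fix i j assume ij: "i \<in> {0..<n}" "j \<in> {0..<n}"
    have "adj E (h i) (h j) \<longleftrightarrow> (i = 0 \<and> j \<noteq> 0) \<or> (j = 0 \<and> i \<noteq> 0)"
    proof (cases "i = 0 \<or> j = 0")
      case True
      have "h 0 = c" by (simp add: h_def)
      then show ?thesis
        using True ij h_in[of i] h_in[of j] not_adj_self dominating[of "h i"] dominating[of "h j"]
          adj_commute[of E "h i" c] by (cases "i = 0"; cases "j = 0") auto
    next
      case False
      then have "h i \<in> V - {c}" "h j \<in> V - {c}" using ij h_in by auto
      then show ?thesis
        using False dominating[of "h i"] dominating[of "h j"] no_triangle[of c "h i" "h j"]
          adj_commute[of E c "h j"] by auto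
    qed
    then show "{h i, h j} \<in> E \<longleftrightarrow> {i, j} \<in> star_edges n"
      using ij by (auto simp: adj_def star_edges_def doubleton_eq_iff)
  qed
qed

lemma twins_pendant_at_common_neighbour:
  assumes "3 \<le> card V" "u \<in> V" "v \<in> V" "u \<noteq> v" "twins V E u v"
  obtains w where "pendant_at E u w" "pendant_at E v w"
proof -
  have twin: "adj E u z \<longleftrightarrow> adj E v z" if "z \<in> V" "z \<noteq> u" "z \<noteq> v" for z
    using assms(5) that by (simp add: twins_def)
  have not_uv: "\<not> adj E u v"
  proof
    assume uv: "adj E u v"
    have "b \<in> {u, v}" if "a \<in> {u, v}" "adj E a b" for a b
    proof (rule ccontr)
      assume "b \<notin> {u, v}"
      then have "adj E u b" "adj E v b" using that twin[of b] adj_in_V by auto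
      then show False using no_triangle[OF uv] by (simp add: adj_commute)
    qed
    then have "V \<subseteq> {u, v}" using adj_closed_superset[of u "{u, v}"] assms(2) by blast
    then show False using ex_in_diff_doubleton[OF finite_V assms(1)] by blast
  qed
  obtain w where uw: "adj E u w" using ex_adj assms(2-4) by blast
  then have vw: "adj E v w" using twin adj_in_V not_adj_self not_uv by blast
  have u_only_w: "x = w" if "adj E u x" for x
  proof (rule ccontr)
    assume "x \<noteq> w"
    have "adj E v x" using that twin adj_in_V not_adj_self not_uv by blast
    then show False
      using no_square[OF uw _ _ _ assms(4), of x] vw that \<open>x \<noteq> w\<close> by (simp add: adj_commute)
  qed
  have v_only_w: "x = w" if "adj E v x" for x
    using that twin adj_in_V not_adj_self not_uv u_only_w by (metis adj_commute)
  show ?thesis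
    using that uw vw u_only_w v_only_w unfolding pendant_at_def by blast
qed

lemma anti_twins_adj_pendant:
  assumes "anti_twins V E u v" "adj E u v" "adj E u w" "w \<noteq> v"
  shows "pendant_at E w u"
proof -
  have anti: "adj E u z \<longleftrightarrow> \<not> adj E v z" if "z \<in> V" "z \<noteq> u" "z \<noteq> v" for z
    using assms(1) that by (simp add: anti_twins_def)
  have not_vw: "\<not> adj E v w" using anti[of w] assms(3,4) adj_in_V not_adj_self by blast
  have "x = u" if wx: "adj E w x" for x
  proof (rule ccontr)
    assume "x \<noteq> u"
    have "x \<noteq> v" using wx not_vw by (auto simp: adj_commute)
    show False
    proof (cases "adj E u x")
      case True
      then show False using no_triangle[OF assms(3) wx] by (simp add: adj_commute)
    next
      case False
      then have "adj E v x" using anti[of x] wx adj_in_V \<open>x \<noteq> u\<close> \<open>x \<noteq> v\<close> by blast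
      then show False
        using no_square[OF assms(3) wx, of v] assms(2,4) \<open>x \<noteq> u\<close> by (simp add: adj_commute)
    qed
  qed
  then show ?thesis using assms(3) unfolding pendant_at_def by (auto simp: adj_commute)
qed

lemma anti_twins_nonadj_cross:
  assumes "anti_twins V E u v" "\<not> adj E u v" "adj E u w" "adj E w x" "x \<noteq> u"
  shows "adj E v x"
proof -
  have anti: "adj E u z \<longleftrightarrow> \<not> adj E v z" if "z \<in> V" "z \<noteq> u" "z \<noteq> v" for z
    using assms(1) that by (simp add: anti_twins_def)
  have not_vw: "\<not> adj E v w" using anti[of w] assms(2,3) adj_in_V not_adj_self by blast
  have "\<not> adj E u x" using no_triangle[OF assms(3,4)] adj_commute[of E u x] by blast
  moreover have "x \<noteq> v" using assms(4) not_vw by (auto simp: adj_commute)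
  ultimately show ?thesis using anti[of x] assms(4,5) adj_in_V by blast
qed

text \<open>Two edges between the neighbourhoods of \<open>u\<close> and \<open>v\<close> would close a cycle of length
  four or six.\<close>

lemma anti_twins_nonadj_bridge:
  assumes "u \<in> V" "v \<in> V" "u \<noteq> v" "anti_twins V E u v" "\<not> adj E u v"
  obtains a b where "adj E u a" "adj E a b" "adj E b v"
    and "\<And>x. adj E u x \<Longrightarrow> x \<noteq> a \<Longrightarrow> pendant_at E x u"
    and "\<And>y. adj E v y \<Longrightarrow> y \<noteq> b \<Longrightarrow> pendant_at E y v"
proof -
  have anti: "adj E u z \<longleftrightarrow> \<not> adj E v z" if "z \<in> V" "z \<noteq> u" "z \<noteq> v" for z
    using assms(4) that by (simp add: anti_twins_def)
  have not_vu: "\<not> adj E v u" using assms(5) by (simp add: adj_commute)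
  note cross_u = anti_twins_nonadj_cross[OF assms(4,5)]
  note cross_v = anti_twins_nonadj_cross[OF anti_twins_sym[OF assms(4)] not_vu]
  have no_common_neighbour: "a \<noteq> b" if "adj E u a" "adj E v b" for a b
    using that anti[of a] adj_in_V not_adj_self assms(5) not_vu by blast
  have unique: "a1 = a2 \<and> b1 = b2"
    if "adj E u a1" "adj E a1 b1" "adj E b1 v" "adj E u a2" "adj E a2 b2" "adj E b2 v"
    for a1 b1 a2 b2
  proof (rule ccontr)
    have distinct: "u \<noteq> a1" "u \<noteq> a2" "a1 \<noteq> v" "a2 \<noteq> v" "u \<noteq> b1" "u \<noteq> b2" "b1 \<noteq> v" "b2 \<noteq> v"
      "a1 \<noteq> b1" "a1 \<noteq> b2" "a2 \<noteq> b1" "a2 \<noteq> b2"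
      using that not_adj_self assms(5) not_vu no_common_neighbour by (auto simp: adj_commute)
    assume "\<not> (a1 = a2 \<and> b1 = b2)"
    then consider "a1 = a2" "b1 \<noteq> b2" | "a1 \<noteq> a2" "b1 = b2" | "a1 \<noteq> a2" "b1 \<noteq> b2" by blast
    then show False
    proof cases
      case 1
      then show False
        using no_square[of a1 b1 v b2] that distinct by (simp add: adj_commute)
    next
      case 2
      then show False
        using no_square[of u a1 b1 a2] that distinct by (simp add: adj_commute)
    next
      case 3
      then show False
        using no_cycle[of "[u, a1, b1, v, b2, a2]"] that distinct assms(1-3) adj_in_V
        by (auto simp: adj_commute)
    qed
  qed
  have "\<exists>a b. adj E u a \<and> adj E a b \<and> adj E b v"
  proof (rule ccontr)
    assume no_bridge: "\<not> ?thesis"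
    have "y \<in> insert u {x. adj E u x}" if "x \<in> insert u {x. adj E u x}" "adj E x y" for x y
      using that no_bridge cross_u adj_commute[of E v y] by auto
    then have "v \<in> insert u {x. adj E u x}"
      using adj_closed_superset[of u "insert u {x. adj E u x}"] assms(1,2) by blast
    then show False using assms(3,5) by blast
  qed
  then obtain a b where ab: "adj E u a" "adj E a b" "adj E b v" by blast
  moreover have "pendant_at E x u" if "adj E u x" "x \<noteq> a" for x
    using that unique[OF that(1) _ _ ab] cross_u unfolding pendant_at_def
    by (metis adj_commute)
  moreover have "pendant_at E y v" if "adj E v y" "y \<noteq> b" for y
    using that unique[OF _ _ _ ab] cross_v unfolding pendant_at_def
    by (metis adj_commute)
  ultimately show ?thesis using that by blast
qed

end

section \<open>Trees other than stars and the paths on four to six vertices\<close>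

locale non_exceptional_tree = tree +
  assumes four_le_card: "4 \<le> card V"
    and not_star: "\<not> graph_iso V E {0..<card V} (star_edges (card V))"
    and not_P4: "\<not> graph_iso V E {0..<4} (path_edges 4)"
    and not_P5: "\<not> graph_iso V E {0..<5} (path_edges 5)"
    and not_P6: "\<not> graph_iso V E {0..<6} (path_edges 6)"
begin

lemma three_le_card: "3 \<le> card V"
  using four_le_card by simp

lemma not_dominating: "c \<in> V \<Longrightarrow> \<exists>x\<in>V. x \<noteq> c \<and> \<not> adj E c x"
  using graph_iso_star_if_dominating not_star by blast

lemma spanning_path_longer_than_6:
  assumes "distinct xs" "set xs = V" "successively (adj E) xs"
  shows "6 < length xs"
proof -
  have "4 \<le> length xs" using four_le_card distinct_card[OF assms(1)] assms(2) by simp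
  moreover have "length xs \<notin> {4, 5, 6}"
    using graph_iso_path_if_spanning_path[OF assms] not_P4 not_P5 not_P6 by auto
  ultimately show ?thesis by auto
qed

text \<open>This is where \<open>P\<^sub>4\<close>, \<open>P\<^sub>5\<close>, \<open>P\<^sub>6\<close> are excluded: with at most one pendant vertex at
  each end of \<open>cs\<close>, the tree would be a path on at most six vertices.\<close>

lemma two_le_Dmax_if_broom:
  assumes cs: "distinct cs" "set cs \<subseteq> V" "successively (adj E) cs"
      "2 \<le> length cs" "length cs \<le> 4"
    and P: "P \<inter> set cs = {}" "\<And>p. p \<in> P \<Longrightarrow> pendant_at E p (hd cs)"
    and Q: "Q \<inter> set cs = {}" "\<And>q. q \<in> Q \<Longrightarrow> pendant_at E q (last cs)"
    and cover: "V = P \<union> set cs \<union> Q"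
  shows "2 \<le> Dmax V E"
proof (rule ccontr)
  assume "\<not> 2 \<le> Dmax V E"
  then have "card P \<le> 1" "card Q \<le> 1"
    using card_pendants_le_Dmax[of P, OF _ P(2)] card_pendants_le_Dmax[of Q, OF _ Q(2)] cover
    by fastforce+
  have "finite P" "finite Q" using finite_V unfolding cover by simp_all
  then obtain ps qs where ps: "set ps = P" "distinct ps" and qs: "set qs = Q" "distinct qs"
    using finite_distinct_list by meson
  have short: "length ps \<le> 1" "length qs \<le> 1"
    using \<open>card P \<le> 1\<close> \<open>card Q \<le> 1\<close> distinct_card[OF ps(2)] distinct_card[OF qs(2)] ps(1) qs(1)
    by simp_all
  have "hd cs \<noteq> last cs"
    using cs(1,4) by (cases cs) (auto simp: last_in_set)
  then have "P \<inter> Q = {}"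
    using P(2) Q(2) unfolding pendant_at_def by blast
  define xs where "xs = ps @ cs @ qs"
  have "distinct xs" "set xs = V"
    using ps qs cs(1) P(1) Q(1) \<open>P \<inter> Q = {}\<close> cover by (auto simp: xs_def)
  moreover have "successively (adj E) xs"
  proof -
    have "successively (adj E) ps" using short(1) by (cases ps) auto
    moreover have "successively (adj E) qs" using short(2) by (cases qs) auto
    moreover have "adj E (last ps) (hd cs)" if "ps \<noteq> []"
      using P(2)[of "last ps"] ps(1) that unfolding pendant_at_def by auto
    moreover have "adj E (last cs) (hd qs)" if "qs \<noteq> []"
      using Q(2)[of "hd qs"] qs(1) that unfolding pendant_at_def by (auto simp: adj_commute)
    ultimately show ?thesis
      using cs(3,4) by (auto simp: xs_def successively_append_iff hd_append)
  qed
  ultimately have "6 < length xs" by (rule spanning_path_longer_than_6)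
  then show False using short cs(5) by (simp add: xs_def)
qed

lemma two_le_Dmax_if_anti_twins:
  assumes "u \<in> V" "v \<in> V" "u \<noteq> v" "anti_twins V E u v"
  shows "2 \<le> Dmax V E"
proof -
  have anti: "adj E u z \<longleftrightarrow> \<not> adj E v z" if "z \<in> V" "z \<noteq> u" "z \<noteq> v" for z
    using assms(4) that by (simp add: anti_twins_def)
  have cover: "V = {x. adj E u x} \<union> {u, v} \<union> {y. adj E v y}"
    using anti assms(1,2) adj_in_V by blast
  show ?thesis
  proof (cases "adj E u v")
    case True
    show ?thesis
    proof (rule two_le_Dmax_if_broom[of "[u, v]" "{x. adj E u x} - {v}" "{y. adj E v y} - {u}"])
      show "\<And>p. p \<in> {x. adj E u x} - {v} \<Longrightarrow> pendant_at E p (hd [u, v])"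
        using anti_twins_adj_pendant[OF assms(4) True] by simp
      show "\<And>q. q \<in> {y. adj E v y} - {u} \<Longrightarrow> pendant_at E q (last [u, v])"
        using anti_twins_adj_pendant[OF anti_twins_sym[OF assms(4)]] True by (simp add: adj_commute)
      show "V = ({x. adj E u x} - {v}) \<union> set [u, v] \<union> ({y. adj E v y} - {u})"
        using cover assms(1,2) by auto
    qed (use assms(1-3) True not_adj_self in auto)
  next
    case False
    obtain a b where ab: "adj E u a" "adj E a b" "adj E b v"
      and pendants_u: "\<And>x. adj E u x \<Longrightarrow> x \<noteq> a \<Longrightarrow> pendant_at E x u"
      and pendants_v: "\<And>y. adj E v y \<Longrightarrow> y \<noteq> b \<Longrightarrow> pendant_at E y v"
      using anti_twins_nonadj_bridge[OF assms False] by blast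
    have "a \<in> V" "b \<in> V" "a \<noteq> u" "b \<noteq> v" using ab adj_in_V not_adj_self by blast+
    moreover have ends: "a \<noteq> v" "b \<noteq> u" using ab False adj_commute[of E b v] by blast+
    ultimately have not_va: "\<not> adj E v a" and not_ub: "\<not> adj E u b"
      using anti[of a] anti[of b] ab(1,3) adj_commute[of E b v] by blast+
    have path: "distinct [u, a, b, v]" "set [u, a, b, v] \<subseteq> V" "successively (adj E) [u, a, b, v]"
      using ab ends assms(1-3) not_ub not_va not_adj_self adj_in_V by auto
    show ?thesis
    proof (rule two_le_Dmax_if_broom
        [of "[u, a, b, v]" "{x. adj E u x} - {a}" "{y. adj E v y} - {b}"])
      show "V = ({x. adj E u x} - {a}) \<union> set [u, a, b, v] \<union> ({y. adj E v y} - {b})"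
        using cover ab(1,3) adj_commute[of E b v] by auto
      show "({x. adj E u x} - {a}) \<inter> set [u, a, b, v] = {}"
        using False not_ub not_adj_self by auto
      show "({y. adj E v y} - {b}) \<inter> set [u, a, b, v] = {}"
        using False not_va not_adj_self adj_commute[of E v u] by auto
    qed (use path pendants_u pendants_v in auto)
  qed
qed

text \<open>Two anti-twins of \<open>u\<close> are twins of each other, hence leaves hanging at \<open>u\<close>, and
  then \<open>u\<close> dominates the tree.\<close>

lemma anti_twins_unique:
  assumes "u \<in> V" "v1 \<in> V" "v2 \<in> V" "v1 \<noteq> u" "v2 \<noteq> u"
    and anti1: "anti_twins V E u v1" and anti2: "anti_twins V E u v2"
  shows "v1 = v2"
proof (rule ccontr)
  assume "v1 \<noteq> v2"
  have a1: "adj E u z \<longleftrightarrow> \<not> adj E v1 z" if "z \<in> V" "z \<noteq> u" "z \<noteq> v1" for z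
    using anti1 that by (simp add: anti_twins_def)
  have a2: "adj E u z \<longleftrightarrow> \<not> adj E v2 z" if "z \<in> V" "z \<noteq> u" "z \<noteq> v2" for z
    using anti2 that by (simp add: anti_twins_def)
  have "twins V E v1 v2"
    unfolding twins_def
  proof
    fix z assume z: "z \<in> V - {v1, v2}"
    show "adj E v1 z \<longleftrightarrow> adj E v2 z"
    proof (cases "z = u")
      case True
      then show ?thesis
        using a1[of v2] a2[of v1] assms(2-5) \<open>v1 \<noteq> v2\<close>
          adj_commute[of E v1 u] adj_commute[of E v2 u] adj_commute[of E v1 v2] by blast
    qed (use a1[of z] a2[of z] z in auto)
  qed
  then obtain w where w1: "pendant_at E v1 w" and w2: "pendant_at E v2 w"
    using twins_pendant_at_common_neighbour[OF three_le_card assms(2,3) \<open>v1 \<noteq> v2\<close>] by blast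
  have "\<not> adj E v2 v1" using w1 w2 not_adj_self unfolding pendant_at_def by blast
  then have "adj E u v1" using a2[of v1] assms(2,4) \<open>v1 \<noteq> v2\<close> by blast
  then have "w = u" using w1 unfolding pendant_at_def by (simp add: adj_commute)
  have "adj E u x" if "x \<in> V" "x \<noteq> u" for x
    using a1[of x] that \<open>adj E u v1\<close> w1 \<open>w = u\<close> unfolding pendant_at_def by (cases "x = v1") auto
  then show False using not_dominating assms(1) by blast
qed

lemma anti_twins_not_twins:
  assumes "u \<in> V" "v \<in> V" "v' \<in> V" "v \<noteq> u" "v' \<noteq> u"
    and anti: "anti_twins V E u v" and twin: "twins V E u v'"
  shows False
proof -
  have a: "adj E u z \<longleftrightarrow> \<not> adj E v z" if "z \<in> V" "z \<noteq> u" "z \<noteq> v" for z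
    using anti that by (simp add: anti_twins_def)
  obtain w where wu: "pendant_at E u w" and wv': "pendant_at E v' w"
    using twins_pendant_at_common_neighbour[OF three_le_card assms(1,3) assms(5)[symmetric] twin]
    by blast
  have "v \<noteq> v'"
  proof
    assume "v = v'"
    obtain z where "z \<in> V" "z \<noteq> u" "z \<noteq> v"
      using ex_in_diff_doubleton[OF finite_V three_le_card] by blast
    then show False using a[of z] twin \<open>v = v'\<close> by (auto simp: twins_def)
  qed
  have "\<not> adj E u v'" using wu wv' not_adj_self unfolding pendant_at_def by blast
  then have "adj E v v'" using a[of v'] assms(3,5) \<open>v \<noteq> v'\<close> by blast
  then have "v = w" using wv' unfolding pendant_at_def by (simp add: adj_commute)
  have "adj E w x" if "x \<in> V" "x \<noteq> w" for x
  proof (cases "x = u")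
    case True
    then show ?thesis using wu adj_commute[of E w u] unfolding pendant_at_def by simp
  next
    case False
    then have "\<not> adj E u x" using wu that(2) unfolding pendant_at_def by blast
    then show ?thesis using a[of x] that False \<open>v = w\<close> by blast
  qed
  moreover have "w \<in> V" using \<open>v = w\<close> assms(2) by simp
  ultimately show False using not_dominating by blast
qed

lemma card_non_Lambda_neighbours_less_Dmax:
  assumes "u \<in> V"
  shows "card {v \<in> V. v \<noteq> u \<and> {u, v} \<notin> Lambda_edges V E} < Dmax V E"
proof -
  define N where "N = {v \<in> V. v \<noteq> u \<and> {u, v} \<notin> Lambda_edges V E}"
  have N_in: "v \<in> V" "u \<noteq> v" if "v \<in> N" for v
    using that by (auto simp: N_def)
  have twins_or_anti: "twins V E u v \<or> anti_twins V E u v" if "v \<in> N" for v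
    using that assms twins_or_anti_twins_if_not_odd_set[of u V v E]
    by (auto simp: N_def Lambda_edges_def)
  have "card N < Dmax V E"
  proof (cases "\<exists>v\<in>N. anti_twins V E u v")
    case True
    then obtain v where v: "v \<in> N" "anti_twins V E u v" by blast
    have "N \<subseteq> {v}"
    proof
      fix v' assume "v' \<in> N"
      then show "v' \<in> {v}"
        using twins_or_anti[of v'] N_in[of v'] N_in[of v] v assms
          anti_twins_unique[of u v v'] anti_twins_not_twins[of u v v'] by auto
    qed
    then have "card N \<le> 1" using card_mono[of "{v}" N] by simp
    moreover have "2 \<le> Dmax V E"
      using two_le_Dmax_if_anti_twins assms N_in[OF v(1)] v(2) by blast
    ultimately show ?thesis by simp
  next
    case no_anti: False
    have pendant_pair: "\<exists>w. pendant_at E u w \<and> pendant_at E v w" if "v \<in> N" for v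
      using twins_pendant_at_common_neighbour[OF three_le_card assms N_in[OF that]]
        twins_or_anti[OF that] no_anti that by blast
    show ?thesis
    proof (cases "N = {}")
      case True
      then show ?thesis using one_le_Dmax four_le_card by simp
    next
      case False
      then obtain w where w: "pendant_at E u w" using pendant_pair by blast
      have "pendant_at E v w" if "v \<in> N" for v
        using pendant_pair[OF that] w unfolding pendant_at_def by blast
      then have "card (insert u N) \<le> Dmax V E"
        using card_pendants_le_Dmax[of "insert u N" w] w assms N_in by blast
      moreover have "finite N" "u \<notin> N" using finite_V by (auto simp: N_def)
      ultimately show ?thesis by simp
    qed
  qed
  then show ?thesis by (simp add: N_def)
qed

lemma Lambda_edges_lower_bound:
  "real (card (Lambda_edges V E)) \<ge> 1/2 * real (card V) * (real (card V) - real (Dmax V E))"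
proof -
  define n where "n = card V"
  define D where "D = Dmax V E"
  define deg where "deg u = card {v \<in> V. v \<noteq> u \<and> {u, v} \<in> Lambda_edges V E}" for u
  have "real n - real D \<le> real (deg u)" if "u \<in> V" for u
  proof -
    have "deg u + card {v \<in> V. v \<noteq> u \<and> {u, v} \<notin> Lambda_edges V E} = card (V - {u})"
      unfolding deg_def using finite_V
      by (subst card_Un_disjoint[symmetric]) (auto intro: arg_cong[where f = card])
    then have "n \<le> deg u + D"
      using card_non_Lambda_neighbours_less_Dmax[OF that] that finite_V by (simp add: n_def D_def)
    then have "real n \<le> real (deg u + D)" by (rule of_nat_mono)
    then show ?thesis by simp
  qed
  then have "real n * (real n - real D) \<le> (\<Sum>u\<in>V. real (deg u))"
    using sum_mono[of V "\<lambda>_. real n - real D" "\<lambda>u. real (deg u)"] by (simp add: n_def)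
  also have "\<dots> = 2 * real (card (Lambda_edges V E))"
    using sum_card_incident_doubletons[OF finite_V, of "Lambda_edges V E"]
    unfolding deg_def of_nat_sum[symmetric] by (simp add: Lambda_edges_def)
  finally show ?thesis by (simp add: n_def D_def)
qed

end

theorem lemma2:
  fixes V :: "'a set" and E :: "'a set set"
  assumes "is_tree V E"
    and "card V \<ge> 4"
    and "\<not> graph_iso V E {0..<card V} (star_edges (card V))"
    and "\<not> graph_iso V E {0..<4} (path_edges 4)"
    and "\<not> graph_iso V E {0..<5} (path_edges 5)"
    and "\<not> graph_iso V E {0..<6} (path_edges 6)"
  shows "real (card (Lambda_edges V E)) \<ge> 1/2 * real (card V) * (real (card V) - real (Dmax V E))"
proof -
  interpret non_exceptional_tree V E
    using assms by unfold_locales (simp_all add: tree_def)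
  show ?thesis by (rule Lambda_edges_lower_bound)
qed

end
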